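(* Let $N>0$ and $L\in\mathbb{Z}_{\ge2}$. Then $C_{L-1}(N)\ge\frac12\ln\frac{L-1}{4\pi eLN}$.
   Context: $\mathcal{B}^n(y,r)$ is the closed Euclidean ball of radius $r$ centered at $y$. A set $\mathcal{C}\subseteq\mathbb{R}^n$ is an $(N,L-1)$-multiple packing ($(N,L-1)$-list-decodable code) if $|\mathcal{C}\cap\mathcal{B}^n(y,\sqrt{nN})|\le L-1$ for every $y\in\mathbb{R}^n$. Its rate is $R(\mathcal{C})=\limsup_{K\to\infty}\frac1n\ln\frac{|\mathcal{C}\cap K\mathcal{A}|}{\mathrm{vol}(K\mathcal{A})}$, where $\mathcal{A}$ is an arbitrary centrally symmetric connected compact set in $\mathbb{R}^n$ with nonempty interior (e.g. the unit ball). $C_{L-1}(N)=\limsup_{n\to\infty}\sup R(\mathcal{C})$ over all $(N,L-1)$-multiple packings $\mathcal{C}\subseteq\mathbb{R}^n$. *)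

theory Defs
  imports "HOL-Analysis.Analysis"
begin

text \<open>Points of R^n are represented as extensional functions nat => real
  supported on {..<n} (i.e. elements of PiE {..<n} (%_. UNIV)).\<close>

definition Rn :: "nat \<Rightarrow> (nat \<Rightarrow> real) set" where
  "Rn n = PiE {..<n} (\<lambda>_. UNIV)"

definition cballn :: "nat \<Rightarrow> (nat \<Rightarrow> real) \<Rightarrow> real \<Rightarrow> (nat \<Rightarrow> real) set" where
  "cballn n y r = {x \<in> Rn n. sqrt (\<Sum>i<n. (x i - y i)^2) \<le> r}"

definition lebn :: "nat \<Rightarrow> (nat \<Rightarrow> real) measure" where
  "lebn n = PiM {..<n} (\<lambda>_. lborel)"

definition multiple_packing :: "nat \<Rightarrow> real \<Rightarrow> nat \<Rightarrow> (nat \<Rightarrow> real) set \<Rightarrow> bool" where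
  "multiple_packing n N L C \<longleftrightarrow> C \<subseteq> Rn n \<and>
     (\<forall>y\<in>Rn n. finite (C \<inter> cballn n y (sqrt (real n * N))) \<and>
                 card (C \<inter> cballn n y (sqrt (real n * N))) \<le> L - 1)"

text \<open>Rate, with the reference body A chosen as the closed unit ball, so K A = B^n(0,K).
  The logarithm of 0 is taken to be minus infinity (and an infinite count to be plus infinity).\<close>
definition rate_term :: "nat \<Rightarrow> (nat \<Rightarrow> real) set \<Rightarrow> real \<Rightarrow> ereal" where
  "rate_term n C K =
     (let S = cballn n (\<lambda>_. 0) K in
      if infinite (C \<inter> S) then \<infinity>
      else if card (C \<inter> S) = 0 then -\<infinity>
      else ereal (ln (real (card (C \<inter> S)) / measure (lebn n) S) / real n))"

definition rate :: "nat \<Rightarrow> (nat \<Rightarrow> real) set \<Rightarrow> ereal" where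
  "rate n C = Limsup at_top (rate_term n C)"

definition capacity :: "real \<Rightarrow> nat \<Rightarrow> ereal" where
  "capacity N L = Limsup sequentially (\<lambda>n. SUP C \<in> {C. multiple_packing n N L C}. rate n C)"

end

theory Submission
  imports Defs "HOL-Probability.Distributions" "HOL-Real_Asymp.Real_Asymp"
begin

text \<open>Take a maximal set \<open>C\<close> of points at pairwise distance \<open>> d\<close>, where
  \<open>d\<^sup>2 = 2 L n N / (L - 1)\<close>. Expanding around the centre \<open>y\<close>, the squared pairwise distances
  of \<open>L\<close> points of the ball \<open>B(y, \<surd>(n N))\<close> sum to at most \<open>2 L\<^sup>2 n N\<close>, but separation makes
  the sum exceed \<open>L (L - 1) d\<^sup>2 = 2 L\<^sup>2 n N\<close>; so \<open>C\<close> is an \<open>(N, L - 1)\<close>-multiple packing.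
  By maximality the balls of radius \<open>d\<close> around \<open>C\<close> cover \<open>\<real>\<^sup>n\<close>, so \<open>C\<close> has density at
  least \<open>1 / vol B(d)\<close>, and the Chernoff bound \<open>vol B(d) \<le> (2 \<pi> e d\<^sup>2 / n)\<^bsup>n/2\<^esup>\<close> turns
  this into rate at least \<open>1/2 ln ((L - 1) / (4 \<pi> e L N))\<close> in every dimension.\<close>

definition distn :: "nat \<Rightarrow> (nat \<Rightarrow> real) \<Rightarrow> (nat \<Rightarrow> real) \<Rightarrow> real" where
  "distn n x y = sqrt (\<Sum>i<n. (x i - y i)\<^sup>2)"

lemma distn_commute: "distn n x y = distn n y x"
  unfolding distn_def by (simp add: power2_commute)

lemma distn_self [simp]: "distn n x x = 0"
  unfolding distn_def by simp

lemma distn_nonneg: "0 \<le> distn n x y"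
  unfolding distn_def by (simp add: sum_nonneg)

lemma power2_distn: "(distn n x y)\<^sup>2 = (\<Sum>i<n. (x i - y i)\<^sup>2)"
  unfolding distn_def by (simp add: sum_nonneg)

lemma distn_triangle: "distn n x z \<le> distn n x y + distn n y z"
proof -
  have L2: "distn n u v = L2_set (\<lambda>i. u i - v i) {..<n}" for u v
    unfolding distn_def L2_set_def by simp
  have "distn n x z = L2_set (\<lambda>i. (x i - y i) + (y i - z i)) {..<n}"
    unfolding L2 by simp
  also have "\<dots> \<le> distn n x y + distn n y z"
    unfolding L2 by (rule L2_set_triangle_ineq)
  finally show ?thesis .
qed

lemma cballn_eq: "cballn n y r = {x \<in> Rn n. distn n x y \<le> r}"
  unfolding cballn_def distn_def by simp

lemma exists_independent_dominating_subset:
  assumes "symp R" and "\<And>x. x \<in> S \<Longrightarrow> R x x"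
  shows "\<exists>M \<subseteq> S. pairwise (\<lambda>x y. \<not> R x y) M \<and> (\<forall>x\<in>S. \<exists>c\<in>M. R x c)"
proof -
  define A where "A = {M. M \<subseteq> S \<and> pairwise (\<lambda>x y. \<not> R x y) M}"
  have "\<Union>Ch \<in> A" if "Ch \<in> chains A" for Ch
  proof -
    have sub: "Ch \<subseteq> A" and ch: "chain\<^sub>\<subseteq> Ch"
      using that by (simp_all add: chains_def)
    have "\<Union>Ch \<subseteq> S"
      using sub by (auto simp: A_def)
    moreover have "pairwise (\<lambda>x y. \<not> R x y) (\<Union>Ch)"
      using sub by (intro pairwise_chain_Union[OF _ ch]) (auto simp: A_def)
    ultimately show ?thesis
      by (simp add: A_def)
  qed
  then obtain M where M: "M \<in> A" and max: "\<forall>X\<in>A. M \<subseteq> X \<longrightarrow> X = M"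
    using Zorn_Lemma[of A] by blast
  have "\<exists>c\<in>M. R x c" if x: "x \<in> S" for x
  proof (rule ccontr)
    assume far: "\<not> (\<exists>c\<in>M. R x c)"
    have "pairwise (\<lambda>x y. \<not> R x y) (insert x M)"
      using M far assms(1) by (auto simp: A_def pairwise_insert dest: sympD)
    then have "insert x M \<in> A"
      using M x by (simp add: A_def)
    then have "x \<in> M"
      using max by blast
    then show False
      using far assms(2) x by blast
  qed
  then show ?thesis
    using M by (auto simp: A_def)
qed

lemma sum_sum_power2_diff:
  fixes a :: "'a \<Rightarrow> real"
  shows "(\<Sum>x\<in>F. \<Sum>z\<in>F. (a x - a z)\<^sup>2) = 2 * card F * (\<Sum>x\<in>F. (a x)\<^sup>2) - 2 * (\<Sum>x\<in>F. a x)\<^sup>2"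
proof -
  define S1 S2 where "S1 = (\<Sum>x\<in>F. a x)" and "S2 = (\<Sum>x\<in>F. (a x)\<^sup>2)"
  have "(\<Sum>z\<in>F. (a x - a z)\<^sup>2) = card F * (a x)\<^sup>2 + S2 - 2 * S1 * a x" for x
    by (simp add: S1_def S2_def power2_diff sum.distrib sum_subtractf sum_distrib_left
        sum_distrib_right ac_simps)
  then have "(\<Sum>x\<in>F. \<Sum>z\<in>F. (a x - a z)\<^sup>2) = card F * S2 + card F * S2 - 2 * S1 * S1"
    by (simp add: S1_def S2_def sum.distrib sum_subtractf sum_distrib_left)
  then show ?thesis
    by (simp add: S1_def S2_def power2_eq_square)
qed

lemma sum_sum_distn_sq_le:
  "(\<Sum>x\<in>F. \<Sum>z\<in>F. (distn n x z)\<^sup>2) \<le> 2 * card F * (\<Sum>x\<in>F. (distn n x y)\<^sup>2)"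
proof -
  have "(\<Sum>x\<in>F. \<Sum>z\<in>F. (distn n x z)\<^sup>2) = (\<Sum>x\<in>F. \<Sum>i<n. \<Sum>z\<in>F. (x i - z i)\<^sup>2)"
    unfolding power2_distn by (intro sum.cong refl sum.swap)
  also have "\<dots> = (\<Sum>i<n. \<Sum>x\<in>F. \<Sum>z\<in>F. ((x i - y i) - (z i - y i))\<^sup>2)"
    by (subst sum.swap) simp
  also have "\<dots> = (\<Sum>i<n. 2 * card F * (\<Sum>x\<in>F. (x i - y i)\<^sup>2) - 2 * (\<Sum>x\<in>F. x i - y i)\<^sup>2)"
    by (simp only: sum_sum_power2_diff)
  also have "\<dots> \<le> (\<Sum>i<n. 2 * card F * (\<Sum>x\<in>F. (x i - y i)\<^sup>2))"
    by (intro sum_mono) simp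
  also have "\<dots> = 2 * card F * (\<Sum>x\<in>F. (distn n x y)\<^sup>2)"
    unfolding power2_distn sum_distrib_left by (rule sum.swap)
  finally show ?thesis .
qed

lemma card_separated_subset_cballn:
  fixes r d :: real
  assumes "finite F" and "card F \<ge> 2" and "F \<subseteq> cballn n y r" and "0 \<le> d"
    and sep: "pairwise (\<lambda>x z. d < distn n x z) F"
  shows "(real (card F) - 1) * d\<^sup>2 < 2 * card F * r\<^sup>2"
proof -
  have "card F * ((real (card F) - 1) * d\<^sup>2) = (\<Sum>x\<in>F. \<Sum>z\<in>F - {x}. d\<^sup>2)"
    using assms(1,2) by (simp add: card_Diff_singleton of_nat_diff)
  also have "\<dots> < (\<Sum>x\<in>F. \<Sum>z\<in>F - {x}. (distn n x z)\<^sup>2)"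
  proof (rule sum_strict_mono)
    fix x assume x: "x \<in> F"
    then have "card (F - {x}) \<noteq> 0"
      using assms(1,2) by (simp add: card_Diff_singleton)
    then have "F - {x} \<noteq> {}"
      by (metis card.empty)
    moreover have "d\<^sup>2 < (distn n x z)\<^sup>2" if "z \<in> F - {x}" for z
      using sep x that \<open>0 \<le> d\<close> by (intro power_strict_mono) (auto simp: pairwise_def)
    ultimately show "(\<Sum>z\<in>F - {x}. d\<^sup>2) < (\<Sum>z\<in>F - {x}. (distn n x z)\<^sup>2)"
      using assms(1) by (intro sum_strict_mono) auto
  qed (use assms(1,2) in auto)
  also have "\<dots> \<le> (\<Sum>x\<in>F. \<Sum>z\<in>F. (distn n x z)\<^sup>2)"
    using assms(1) by (intro sum_mono sum_mono2) auto
  also have "\<dots> \<le> 2 * card F * (\<Sum>x\<in>F. (distn n x y)\<^sup>2)"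
    by (rule sum_sum_distn_sq_le)
  also have "\<dots> \<le> 2 * card F * (\<Sum>x\<in>F. r\<^sup>2)"
    using assms(3) by (intro mult_left_mono sum_mono power_mono) (auto simp: cballn_eq distn_nonneg)
  also have "\<dots> = card F * (2 * card F * r\<^sup>2)"
    by simp
  finally show ?thesis
    using assms(1,2) by (simp add: mult_less_cancel_left_pos)
qed

lemma separated_card_cballn_le:
  fixes r d :: real
  assumes "L \<ge> 2" and "0 \<le> d" and sep: "pairwise (\<lambda>x z. d < distn n x z) C"
    and rd: "2 * real L * r\<^sup>2 \<le> (real L - 1) * d\<^sup>2"
  shows "finite (C \<inter> cballn n y r) \<and> card (C \<inter> cballn n y r) \<le> L - 1"
proof -
  have no_L_subset: False if "F \<subseteq> C \<inter> cballn n y r" "finite F" "card F = L" for F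
    using card_separated_subset_cballn[of F n y r d] that assms pairwise_subset[OF sep]
    by auto
  have fin: "finite (C \<inter> cballn n y r)"
    using no_L_subset infinite_arbitrarily_large by metis
  moreover have "card (C \<inter> cballn n y r) \<le> L - 1"
  proof (rule ccontr)
    assume "\<not> ?thesis"
    then have "L \<le> card (C \<inter> cballn n y r)"
      by simp
    then obtain F where "F \<subseteq> C \<inter> cballn n y r" "card F = L" "finite F"
      by (rule obtain_subset_with_card_n)
    then show False
      using no_L_subset by blast
  qed
  ultimately show ?thesis ..
qed

lemma space_lebn: "space (lebn n) = Rn n"
  by (simp add: lebn_def Rn_def space_PiM)

lemma sets_lebn_cballn: "cballn n y r \<in> sets (lebn n)"
proof -
  have "cballn n y r = {x \<in> space (lebn n). sqrt (\<Sum>i<n. (x i - y i)\<^sup>2) \<le> r}"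
    by (simp add: cballn_def space_lebn)
  also have "\<dots> \<in> sets (lebn n)"
    unfolding lebn_def by measurable
  finally show ?thesis .
qed

lemma nn_integral_gaussian:
  fixes m \<sigma> :: real
  assumes "\<sigma> > 0"
  shows "(\<integral>\<^sup>+x. ennreal (exp (- ((x - m)\<^sup>2 / (2 * \<sigma>\<^sup>2)))) \<partial>lborel) = ennreal (sqrt (2 * pi * \<sigma>\<^sup>2))"
proof -
  have "ennreal (exp (- ((x - m)\<^sup>2 / (2 * \<sigma>\<^sup>2))))
      = ennreal (sqrt (2 * pi * \<sigma>\<^sup>2)) * ennreal (normal_density m \<sigma> x)" for x
    using assms by (simp add: normal_density_def ennreal_mult[symmetric])
  then have "(\<integral>\<^sup>+x. ennreal (exp (- ((x - m)\<^sup>2 / (2 * \<sigma>\<^sup>2)))) \<partial>lborel)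
      = ennreal (sqrt (2 * pi * \<sigma>\<^sup>2)) * (\<integral>\<^sup>+x. ennreal (normal_density m \<sigma> x) \<partial>lborel)"
    by (simp add: nn_integral_cmult)
  also have "(\<integral>\<^sup>+x. ennreal (normal_density m \<sigma> x) \<partial>lborel) = 1"
    using assms by (subst nn_integral_eq_integral) auto
  finally show ?thesis
    by simp
qed

lemma sqrt_exp_1: "sqrt (exp 1) = exp (1/2)"
  by (rule real_sqrt_unique) (simp_all add: power2_eq_square exp_add[symmetric])

text \<open>Chernoff bound: with \<open>\<sigma>\<^sup>2 = R\<^sup>2 / n\<close>, the indicator of the ball is dominated by
  \<open>\<Prod>i<n. exp (1/2 - (x i - c i)\<^sup>2 / (2 * \<sigma>\<^sup>2))\<close>, whose integral factorizes into
  one-dimensional Gaussian integrals.\<close>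

lemma emeasure_cballn_le:
  assumes "n \<ge> 1" and "R > 0"
  shows "emeasure (lebn n) (cballn n c R) \<le> ennreal (sqrt (2 * pi * exp 1 * R\<^sup>2 / n) ^ n)"
proof -
  interpret product_sigma_finite "\<lambda>_::nat. lborel :: real measure" by standard
  define \<sigma> where "\<sigma> = R / sqrt n"
  have \<sigma>: "\<sigma> > 0" "\<sigma>\<^sup>2 = R\<^sup>2 / n"
    using assms by (simp_all add: \<sigma>_def power_divide)
  define f where "f = (\<lambda>i t. ennreal (exp (1/2) * exp (- ((t - c i)\<^sup>2 / (2 * \<sigma>\<^sup>2)))))"
  have indicator_le: "indicator (cballn n c R) x \<le> (\<Prod>i<n. f i (x i))" for x
  proof (cases "x \<in> cballn n c R")
    case True
    then have "(distn n x c)\<^sup>2 \<le> R\<^sup>2"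
      by (intro power_mono) (auto simp: cballn_eq distn_nonneg)
    then have "(\<Sum>i<n. (x i - c i)\<^sup>2) / (2 * \<sigma>\<^sup>2) \<le> n / 2"
      using \<sigma> assms by (simp add: power2_distn field_simps)
    then have "1 \<le> exp (\<Sum>i<n. 1/2 - (x i - c i)\<^sup>2 / (2 * \<sigma>\<^sup>2))"
      by (simp add: sum_subtractf sum_divide_distrib[symmetric])
    also have "\<dots> = (\<Prod>i<n. exp (1/2) * exp (- ((x i - c i)\<^sup>2 / (2 * \<sigma>\<^sup>2))))"
      by (simp only: exp_sum[OF finite_lessThan] diff_conv_add_uminus exp_add)
    finally show ?thesis
      using True by (simp add: f_def prod_ennreal)
  qed (simp add: f_def)
  have "emeasure (lebn n) (cballn n c R) = (\<integral>\<^sup>+x. indicator (cballn n c R) x \<partial>lebn n)"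
    by (simp add: sets_lebn_cballn)
  also have "\<dots> \<le> (\<integral>\<^sup>+x. (\<Prod>i<n. f i (x i)) \<partial>lebn n)"
    by (intro nn_integral_mono indicator_le)
  also have "\<dots> = (\<Prod>i<n. integral\<^sup>N lborel (f i))"
    unfolding lebn_def by (intro product_nn_integral_prod) (auto simp: f_def)
  also have "\<dots> = (\<Prod>i<n. ennreal (exp (1/2) * sqrt (2 * pi * \<sigma>\<^sup>2)))"
    using \<sigma>(1) by (simp add: f_def ennreal_mult nn_integral_cmult nn_integral_gaussian)
  also have "\<dots> = ennreal (sqrt (2 * pi * exp 1 * R\<^sup>2 / n) ^ n)"
    using \<sigma> by (simp add: ennreal_power sqrt_exp_1[symmetric] real_sqrt_mult[symmetric] ac_simps)
  finally show ?thesis .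
qed

lemma emeasure_cballn_ge:
  assumes "n \<ge> 1" and "K > 0"
  shows "ennreal ((2 * K / n) ^ n) \<le> emeasure (lebn n) (cballn n c K)"
proof -
  interpret product_sigma_finite "\<lambda>_::nat. lborel :: real measure" by standard
  define B where "B = PiE {..<n} (\<lambda>i. {c i - K / n .. c i + K / n})"
  have "B \<subseteq> cballn n c K"
  proof
    fix x assume x: "x \<in> B"
    have "\<bar>x i - c i\<bar> \<le> K / n" if "i < n" for i
      using PiE_mem[OF x[unfolded B_def], of i] that by (simp add: abs_le_iff algebra_simps)
    then have "(x i - c i)\<^sup>2 \<le> (K / n)\<^sup>2" if "i < n" for i
      using that assms by (simp add: power2_le_iff_abs_le)
    then have "(\<Sum>i<n. (x i - c i)\<^sup>2) \<le> n * (K / n)\<^sup>2"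
      using sum_mono[of "{..<n}" "\<lambda>i. (x i - c i)\<^sup>2" "\<lambda>_. (K / n)\<^sup>2"] by simp
    also have "\<dots> \<le> K\<^sup>2"
      using assms by (simp add: power2_eq_square field_simps)
    finally have "distn n x c \<le> K"
      using assms by (simp add: distn_def real_sqrt_le_iff real_le_lsqrt sum_nonneg)
    moreover have "x \<in> Rn n"
      using x by (auto simp: B_def Rn_def PiE_iff)
    ultimately show "x \<in> cballn n c K"
      by (simp add: cballn_eq)
  qed
  then have "emeasure (lebn n) B \<le> emeasure (lebn n) (cballn n c K)"
    by (intro emeasure_mono sets_lebn_cballn)
  moreover have "emeasure (lebn n) B = (\<Prod>i<n. emeasure lborel {c i - K / n .. c i + K / n})"
    unfolding lebn_def B_def by (rule emeasure_PiM) auto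
  moreover have "\<dots> = ennreal ((2 * K / n) ^ n)"
    using assms by (simp add: prod_ennreal ennreal_power)
  ultimately show ?thesis
    by simp
qed

lemma emeasure_cballn_finite:
  assumes "n \<ge> 1" and "R > 0"
  shows "emeasure (lebn n) (cballn n c R) \<noteq> \<infinity>"
  using emeasure_cballn_le[OF assms, of c] by (auto simp: top_unique)

lemma measure_cballn_pos:
  assumes "n \<ge> 1" and "K > 0"
  shows "0 < measure (lebn n) (cballn n c K)"
proof -
  have "ennreal ((2 * K / n) ^ n) \<le> ennreal (measure (lebn n) (cballn n c K))"
    using emeasure_cballn_ge[OF assms] emeasure_cballn_finite[OF assms]
    by (simp add: emeasure_eq_ennreal_measure)
  moreover have "0 < (2 * K / n) ^ n"
    using assms by simp
  ultimately show ?thesis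
    by (simp add: ennreal_le_iff)
qed

lemma measure_cballn_le:
  assumes "n \<ge> 1" and "K > 0"
  shows "measure (lebn n) (cballn n c K) \<le> sqrt (2 * pi * exp 1 / n) ^ n * K ^ n"
proof -
  have "sqrt (2 * pi * exp 1 * K\<^sup>2 / n) = sqrt (2 * pi * exp 1 / n) * K"
    using assms by (simp add: real_sqrt_mult real_sqrt_divide)
  then have "ennreal (measure (lebn n) (cballn n c K)) \<le> ennreal (sqrt (2 * pi * exp 1 / n) ^ n * K ^ n)"
    using emeasure_cballn_le[OF assms] emeasure_cballn_finite[OF assms]
    by (simp add: emeasure_eq_ennreal_measure power_mult_distrib)
  then show ?thesis
    using assms by (simp add: ennreal_le_iff)
qed

lemma emeasure_cballn_le_card_covering:
  fixes K d V :: real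
  assumes "C \<subseteq> Rn n" and cover: "\<forall>x\<in>Rn n. \<exists>c\<in>C. distn n x c \<le> d"
    and fin: "finite (C \<inter> cballn n y (K + d))"
    and "V \<ge> 0" and V: "\<And>c. emeasure (lebn n) (cballn n c d) \<le> ennreal V"
  shows "emeasure (lebn n) (cballn n y K) \<le> ennreal (card (C \<inter> cballn n y (K + d)) * V)"
proof -
  define G where "G = C \<inter> cballn n y (K + d)"
  have "cballn n y K \<subseteq> (\<Union>c\<in>G. cballn n c d)"
  proof
    fix x assume "x \<in> cballn n y K"
    then have x: "x \<in> Rn n" "distn n x y \<le> K"
      by (auto simp: cballn_eq)
    then obtain c where c: "c \<in> C" "distn n x c \<le> d"
      using cover by blast
    have "distn n c y \<le> distn n c x + distn n x y"
      by (rule distn_triangle)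
    also have "\<dots> \<le> K + d"
      using c x by (simp add: distn_commute)
    finally have "c \<in> G"
      using c \<open>C \<subseteq> Rn n\<close> by (auto simp: G_def cballn_eq)
    moreover have "x \<in> cballn n c d"
      using x c by (simp add: cballn_eq)
    ultimately show "x \<in> (\<Union>c\<in>G. cballn n c d)"
      by blast
  qed
  then have "emeasure (lebn n) (cballn n y K) \<le> emeasure (lebn n) (\<Union>c\<in>G. cballn n c d)"
    using fin by (intro emeasure_mono) (auto simp: G_def sets_lebn_cballn)
  also have "\<dots> \<le> (\<Sum>c\<in>G. emeasure (lebn n) (cballn n c d))"
    using fin by (intro emeasure_subadditive_finite) (auto simp: G_def sets_lebn_cballn)
  also have "\<dots> \<le> (\<Sum>c\<in>G. ennreal V)"
    by (intro sum_mono V)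
  also have "\<dots> = ennreal (card G * V)"
    using \<open>V \<ge> 0\<close> by (simp add: ennreal_mult ennreal_of_nat_eq_real_of_nat)
  finally show ?thesis
    by (simp add: G_def)
qed

lemma rate_term_ge_covering:
  fixes K d V :: real
  assumes "n \<ge> 1" and "K > 0" and "d > 0" and "C \<subseteq> Rn n"
    and cover: "\<forall>x\<in>Rn n. \<exists>c\<in>C. distn n x c \<le> d"
    and "V > 0" and V: "\<And>c. emeasure (lebn n) (cballn n c d) \<le> ennreal V"
  shows "ereal ((ln (measure (lebn n) (cballn n (\<lambda>_. 0) K)) - ln V
                 - ln (measure (lebn n) (cballn n (\<lambda>_. 0) (K + d)))) / n)
         \<le> rate_term n C (K + d)"
proof (cases "finite (C \<inter> cballn n (\<lambda>_. 0) (K + d))")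
  case False
  then show ?thesis
    by (simp add: rate_term_def)
next
  case True
  define G where "G = C \<inter> cballn n (\<lambda>_. 0) (K + d)"
  define g1 where "g1 = measure (lebn n) (cballn n (\<lambda>_. 0) K)"
  define g2 where "g2 = measure (lebn n) (cballn n (\<lambda>_. 0) (K + d))"
  have g: "0 < g1" "0 < g2"
    using assms by (simp_all add: g1_def g2_def measure_cballn_pos)
  have "ennreal g1 \<le> ennreal (card G * V)"
    using emeasure_cballn_le_card_covering[OF \<open>C \<subseteq> Rn n\<close> cover True less_imp_le[OF \<open>V > 0\<close>] V]
      emeasure_cballn_finite[OF \<open>n \<ge> 1\<close> \<open>K > 0\<close>]
    by (simp add: G_def g1_def emeasure_eq_ennreal_measure)
  then have card_G: "g1 / V \<le> card G"
    using \<open>V > 0\<close> by (simp add: ennreal_le_iff divide_le_eq)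
  have "0 < g1 / V"
    using g \<open>V > 0\<close> by simp
  then have "0 < card G"
    using card_G by linarith
  have "ln g1 - ln V - ln g2 = ln (g1 / V / g2)"
    using g \<open>V > 0\<close> by (simp add: ln_div ln_mult)
  also have "\<dots> \<le> ln (card G / g2)"
    using card_G g \<open>V > 0\<close> by (intro ln_mono divide_right_mono divide_pos_pos) auto
  finally show ?thesis
    using True \<open>0 < card G\<close> \<open>n \<ge> 1\<close>
    by (simp add: rate_term_def card_gt_0_iff Let_def divide_right_mono
        G_def[symmetric] g1_def[symmetric] g2_def[symmetric])
qed

lemma polynomially_bounded_slow_ln_growth:
  fixes g :: "real \<Rightarrow> real"
  assumes "d > 0" and "\<delta> > 0"
    and pos: "\<And>K. K > 0 \<Longrightarrow> 0 < g K" and bound: "\<And>K. K > 0 \<Longrightarrow> g K \<le> A * K ^ n"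
  shows "\<exists>K \<ge> K0. ln (g (K + d)) < ln (g K) + \<delta>"
proof (rule ccontr)
  assume "\<not> ?thesis"
  then have fast: "ln (g K) + \<delta> \<le> ln (g (K + d))" if "K \<ge> K0" for K
    using that by (simp add: not_less)
  define K1 where "K1 = max K0 1"
  have K1: "K0 \<le> K1" "0 < K1"
    by (simp_all add: K1_def)
  have "A > 0"
    using pos[of 1] bound[of 1] by simp
  have grow: "ln (g K1) + j * \<delta> \<le> ln (g (K1 + j * d))" for j :: nat
  proof (induction j)
    case (Suc j)
    have "ln (g K1) + Suc j * \<delta> \<le> ln (g (K1 + j * d)) + \<delta>"
      using Suc.IH by (simp add: algebra_simps)
    also have "\<dots> \<le> ln (g (K1 + Suc j * d))"
      using fast[of "K1 + j * d"] K1 \<open>d > 0\<close> by (simp add: add_increasing2 algebra_simps)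
    finally show ?case .
  qed simp
  have ln_g_le: "ln (g K) \<le> ln A + n * ln K" if "K > 0" for K
  proof -
    have "ln (g K) \<le> ln (A * K ^ n)"
      using pos[OF that] bound[OF that] \<open>A > 0\<close> that by simp
    also have "\<dots> = ln A + n * ln K"
      using \<open>A > 0\<close> that by (simp add: ln_mult ln_realpow)
    finally show ?thesis .
  qed
  have ln_g_K1: "ln (g K1) \<le> ln A + n * ln (K1 + j * d) - j * \<delta>" for j :: nat
    using grow[of j] ln_g_le[of "K1 + j * d"] K1 \<open>d > 0\<close> by (simp add: add_pos_nonneg)
  have "filterlim (\<lambda>j::nat. ln A + n * ln (K1 + j * d) - j * \<delta>) at_bot sequentially"
    using K1 \<open>d > 0\<close> \<open>\<delta> > 0\<close> by real_asymp
  then obtain j :: nat where "ln A + n * ln (K1 + j * d) - j * \<delta> \<le> ln (g K1) - 1"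
    by (auto simp: filterlim_at_bot eventually_sequentially)
  then show False
    using ln_g_K1[of j] by linarith
qed

text \<open>The covering gives \<open>|C \<inter> B(K + d)| \<ge> vol B(K) / V\<close>. The loss factor
  \<open>vol B(K) / vol B(K + d)\<close> cannot stay below a fixed constant \<open>< 1\<close> for all large \<open>K\<close>,
  because ball volumes grow only polynomially in \<open>K\<close>; this avoids computing them exactly.\<close>

lemma rate_ge_covering:
  fixes d V :: real
  assumes "n \<ge> 1" and "d > 0" and "C \<subseteq> Rn n"
    and cover: "\<forall>x\<in>Rn n. \<exists>c\<in>C. distn n x c \<le> d"
    and "V > 0" and V: "\<And>c. emeasure (lebn n) (cballn n c d) \<le> ennreal V"
  shows "ereal (- ln V / n) \<le> rate n C"
proof (rule ccontr)
  assume "\<not> ?thesis"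
  then have "rate n C < ereal (- ln V / n)"
    by simp
  then obtain e where rate_lt: "rate n C < ereal e" and e: "ereal e < ereal (- ln V / n)"
    by (blast dest: ereal_dense2)
  have "eventually (\<lambda>K. rate_term n C K < ereal e) at_top"
    using rate_lt unfolding rate_def by (rule Limsup_lessD)
  then obtain K1 where K1: "\<And>K. K \<ge> K1 \<Longrightarrow> rate_term n C K < ereal e"
    by (auto simp: eventually_at_top_linorder)
  define g where "g K = measure (lebn n) (cballn n (\<lambda>_. 0) K)" for K
  define \<delta> where "\<delta> = - ln V - n * e"
  have "\<delta> > 0"
    using e \<open>n \<ge> 1\<close> by (simp add: \<delta>_def field_simps)
  then obtain K where K: "K \<ge> max K1 1" and slow: "ln (g (K + d)) < ln (g K) + \<delta>"
    using polynomially_bounded_slow_ln_growth[of d \<delta> g] \<open>d > 0\<close> \<open>n \<ge> 1\<close>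
      measure_cballn_pos measure_cballn_le unfolding g_def by blast
  have "ereal e = ereal ((ln (g K) - ln V - (ln (g K) + \<delta>)) / n)"
    using \<open>n \<ge> 1\<close> by (simp add: \<delta>_def)
  also have "\<dots> \<le> ereal ((ln (g K) - ln V - ln (g (K + d))) / n)"
    using slow \<open>n \<ge> 1\<close> by (simp add: divide_right_mono)
  also have "\<dots> \<le> rate_term n C (K + d)"
    unfolding g_def using K assms by (intro rate_term_ge_covering) auto
  also have "\<dots> < ereal e"
    using K \<open>d > 0\<close> by (intro K1) simp
  finally show False
    by simp
qed

lemma ln_sqrt_power_div:
  "x > 0 \<Longrightarrow> n \<ge> 1 \<Longrightarrow> - ln (sqrt x ^ n) / n = (1/2) * ln (1 / x)"
  by (simp add: ln_realpow ln_sqrt ln_div)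

lemma exists_multiple_packing_rate_ge:
  assumes "N > 0" and "L \<ge> 2" and "n \<ge> 1"
  shows "\<exists>C. multiple_packing n N L C
               \<and> ereal ((1/2) * ln ((real L - 1) / (4 * pi * exp 1 * real L * N))) \<le> rate n C"
proof -
  define r where "r = sqrt (real n * N)"
  define d where "d = sqrt (2 * real L * (real n * N) / (real L - 1))"
  have "d > 0" and rd: "2 * real L * r\<^sup>2 = (real L - 1) * d\<^sup>2"
    using assms by (simp_all add: r_def d_def)
  obtain C where "C \<subseteq> Rn n" and sep: "pairwise (\<lambda>x y. \<not> distn n x y \<le> d) C"
    and cover: "\<forall>x\<in>Rn n. \<exists>c\<in>C. distn n x c \<le> d"
    using exists_independent_dominating_subset[of "\<lambda>x y. distn n x y \<le> d" "Rn n"] \<open>d > 0\<close>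
    by (auto simp: symp_def distn_commute)
  have "multiple_packing n N L C"
    using separated_card_cballn_le[OF \<open>L \<ge> 2\<close> _ _ rd[THEN eq_refl]] sep \<open>C \<subseteq> Rn n\<close> \<open>d > 0\<close>
    by (simp add: multiple_packing_def r_def not_le)
  moreover have "(1/2) * ln ((real L - 1) / (4 * pi * exp 1 * real L * N))
                 = - ln (sqrt (2 * pi * exp 1 * d\<^sup>2 / n) ^ n) / n"
    using assms \<open>d > 0\<close> by (subst ln_sqrt_power_div) (auto simp: d_def field_simps)
  moreover have "ereal (- ln (sqrt (2 * pi * exp 1 * d\<^sup>2 / n) ^ n) / n) \<le> rate n C"
    using assms \<open>d > 0\<close> \<open>C \<subseteq> Rn n\<close> cover emeasure_cballn_le[OF \<open>n \<ge> 1\<close> \<open>d > 0\<close>]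
    by (intro rate_ge_covering) auto
  ultimately show ?thesis
    by metis
qed

theorem mainTheorem12:
  fixes N :: real and L :: nat
  assumes "N > 0" and "L \<ge> 2"
  shows "capacity N L \<ge> ereal ((1/2) * ln ((real L - 1) / (4 * pi * exp 1 * real L * N)))"
proof -
  have "ereal ((1/2) * ln ((real L - 1) / (4 * pi * exp 1 * real L * N)))
          \<le> (SUP C \<in> {C. multiple_packing n N L C}. rate n C)" if "n \<ge> 1" for n
    using exists_multiple_packing_rate_ge[OF assms that] by (auto intro: SUP_upper2)
  then show ?thesis
    unfolding capacity_def by (intro le_Limsup) (auto simp: eventually_sequentially)
qed

end
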